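(* For every integer $n$ and every integer $r$ with $3\le r\le n-2$, $A(n,r-1)\,(A(n,r-1)-1) > 2A(n,3r-2)$.
   Context: $A(n,q)$ is the Eulerian number, the number of permutations of $\{1,\dots,n\}$ with exactly $q$ ascents, with the convention $A(n,q)=0$ if $q\ge n$. *)

theory Defs
  imports "HOL-Combinatorics.Permutations"
begin

definition ascents :: "nat \<Rightarrow> (nat \<Rightarrow> nat) \<Rightarrow> nat" where
  "ascents n p = card {i \<in> {1..<n}. p i < p (Suc i)}"

definition eulerian :: "nat \<Rightarrow> nat \<Rightarrow> nat" where
  "eulerian n q = card {p. p permutes {1..n} \<and> ascents n p = q}"

end

theory Submission
  imports Defs "HOL-Combinatorics.Multiset_Permutations"
begin

(* Reading permutations of {1..n} as lists, inserting the largest letter n+1 into each of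
   the n+1 gaps of a permutation of {1..n} gives the recurrence
   A(n+1,k) = (k+1) A(n,k) + (n+1-k) A(n,k-1), and complementing the letters gives the
   symmetry A(n,k) = A(n,n-1-k). Together with Worpitzky's identity
   x^n = sum_j A(n,j) binom(x+j,n) they yield, for k < n,
     (k+1)^(n-k-1) <= A(n,k),   A(n,k) <= (k+1)^n,   (k+1)^n <= A(n,k) + (n+1) k^n.
   With k = r-1 >= 2 the theorem follows from A(n,k) >= 3 and 4 A(n,3k+1) <= A(n,k)^2.
   The latter is trivial for n <= 3k+1; for n <= 4k+2 symmetry bounds A(n,3k+1) by
   (k+1)^n; beyond that (3k+2)^n must be compared with (k+1)^(2n), using the first lower
   bound when k >= 9 and the sharper third one (plus a finite check) when k <= 8. *)

section \<open>Ascents of lists\<close>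

fun list_ascents :: "'a::linorder list \<Rightarrow> nat" where
  "list_ascents (x # y # zs) = (if x < y then 1 else 0) + list_ascents (y # zs)"
| "list_ascents _ = 0"

lemma list_ascents_conv_card:
  "list_ascents xs = card {i. Suc i < length xs \<and> xs ! i < xs ! Suc i}"
proof (induction xs rule: list_ascents.induct)
  case (1 x y zs)
  let ?S = "\<lambda>xs. {i. Suc i < length xs \<and> xs ! i < xs ! Suc i}"
  have "?S (x # y # zs) = (if x < y then {0} else {}) \<union> Suc ` ?S (y # zs)"
  proof (rule set_eqI)
    fix i show "i \<in> ?S (x # y # zs) \<longleftrightarrow> i \<in> (if x < y then {0} else {}) \<union> Suc ` ?S (y # zs)"
      by (cases i) auto
  qed
  then show ?case
    using 1 by (simp add: card_image card_insert_if)
qed auto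

lemma list_ascents_less_length: "xs \<noteq> [] \<Longrightarrow> list_ascents xs < length xs"
  by (induction xs rule: list_ascents.induct) auto

lemma list_ascents_Cons_greater:
  "\<forall>y\<in>set ys. y < x \<Longrightarrow> list_ascents (x # ys) = list_ascents ys"
  by (cases ys) auto

lemma list_ascents_map_antimono:
  assumes "distinct xs" "\<And>x y. x \<in> set xs \<Longrightarrow> y \<in> set xs \<Longrightarrow> x < y \<Longrightarrow> f y < f x"
  shows "list_ascents (map f xs) = length xs - 1 - list_ascents xs"
  using assms
proof (induction xs rule: list_ascents.induct)
  case (1 x y zs)
  have "x \<noteq> y" using "1.prems"(1) by auto
  then have "(f x < f y) \<longleftrightarrow> \<not> x < y"
    using "1.prems"(2)[of x y] "1.prems"(2)[of y x] by (auto simp: less_not_sym)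
  moreover have "list_ascents (y # zs) < length (y # zs)"
    by (rule list_ascents_less_length) simp
  ultimately show ?case
    using 1 by auto
qed auto

lemma inj_on_card_eq_imp_bij_betw:
  assumes "inj_on f A" "f ` A \<subseteq> B" "finite B" "card A = card B"
  shows "bij_betw f A B"
  using assms by (metis bij_betw_imageI card_image card_subset_eq)

lemma bij_betw_map_permutes:
  assumes "distinct xs"
  shows "bij_betw (\<lambda>p. map p xs) {p. p permutes set xs} (permutations_of_set (set xs))"
proof -
  let ?f = "\<lambda>p. map p xs"
  have "inj_on ?f {p. p permutes set xs}"
  proof (rule inj_onI, rule ext)
    fix p q x assume "p \<in> {p. p permutes set xs}" "q \<in> {p. p permutes set xs}" "?f p = ?f q"
    then show "p x = q x"
      by (cases "x \<in> set xs") (auto simp: map_eq_conv permutes_not_in)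
  qed
  moreover have "?f ` {p. p permutes set xs} \<subseteq> permutations_of_set (set xs)"
    using assms by (auto simp: permutations_of_set_def distinct_map permutes_inj_on permutes_image)
  moreover have "card {p. p permutes set xs} = card (permutations_of_set (set xs))"
    by (simp add: card_permutations)
  ultimately show ?thesis
    by (intro inj_on_card_eq_imp_bij_betw) simp_all
qed

lemma ascents_conv_list_ascents: "ascents n p = list_ascents (map p [1..<Suc n])"
proof -
  have "{i \<in> {1..<n}. p i < p (Suc i)} = Suc ` {i. Suc i < n \<and> p (Suc i) < p (Suc (Suc i))}"
    by (auto simp: image_iff dest!: Suc_le_D)
  then show ?thesis
    unfolding ascents_def list_ascents_conv_card
    by (simp add: card_image nth_upt del: upt_Suc cong: conj_cong)
qed

lemma eulerian_conv_list_ascents: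
  "eulerian n k = card {xs \<in> permutations_of_set {1..n}. list_ascents xs = k}"
proof -
  have "bij_betw (\<lambda>p. map p [1..<Suc n]) {p. p permutes {1..n} \<and> ascents n p = k}
          {xs \<in> permutations_of_set {1..n}. list_ascents xs = k}"
    using bij_betw_Collect[OF bij_betw_map_permutes[of "[1..<Suc n]"]]
    by (simp add: ascents_conv_list_ascents atLeastLessThanSuc_atLeastAtMost del: upt_Suc)
  then show ?thesis
    unfolding eulerian_def by (rule bij_betw_same_card)
qed

section \<open>Inserting the largest element\<close>

definition insert_at :: "nat \<Rightarrow> 'a \<Rightarrow> 'a list \<Rightarrow> 'a list" where
  "insert_at j x xs = take j xs @ x # drop j xs"

lemma insert_at_0 [simp]: "insert_at 0 x xs = x # xs"
  by (simp add: insert_at_def)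

lemma insert_at_Suc_Cons [simp]: "insert_at (Suc j) x (y # ys) = y # insert_at j x ys"
  by (simp add: insert_at_def)

lemma set_insert_at [simp]: "set (insert_at j x xs) = insert x (set xs)"
proof -
  have "set (take j xs) \<union> set (drop j xs) = set xs"
    by (metis append_take_drop_id set_append)
  then show ?thesis by (auto simp: insert_at_def)
qed

lemma distinct_insert_at: "distinct xs \<Longrightarrow> x \<notin> set xs \<Longrightarrow> distinct (insert_at j x xs)"
  using distinct_append[of "take j xs" "drop j xs"]
  by (auto simp: insert_at_def dest: in_set_takeD in_set_dropD)

lemma list_ascents_insert_at_greater:
  assumes "\<forall>y\<in>set ys. y < x"
  shows "list_ascents (insert_at j x ys) \<in> {list_ascents ys, Suc (list_ascents ys)}"
  using assms
proof (induction ys arbitrary: j rule: list_ascents.induct)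
  case (1 y z zs)
  show ?case
  proof (cases j)
    case 0
    then show ?thesis using "1.prems" by (simp add: list_ascents_Cons_greater)
  next
    case (Suc i)
    show ?thesis
    proof (cases i)
      case 0
      then show ?thesis using Suc "1.prems" less_asym[of x z] by (auto simp: list_ascents_Cons_greater)
    next
      case (Suc i')
      then show ?thesis using \<open>j = Suc i\<close> "1.IH"[of i] "1.prems" by auto
    qed
  qed
qed (auto simp: insert_at_def take_Cons' drop_Cons')

lemma card_Collect_le_Suc_shift:
  "card {j. j \<le> Suc n \<and> P j} = (if P 0 then 1 else 0) + card {j. j \<le> n \<and> P (Suc j)}"
proof -
  have "{j. j \<le> Suc n \<and> P j} = (if P 0 then {0} else {}) \<union> Suc ` {j. j \<le> n \<and> P (Suc j)}"
    using atMost_Suc_eq_insert_0[of n] by (auto simp: set_eq_iff)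
  then show ?thesis by (simp add: card_image)
qed

lemma card_insert_at_list_ascents_Suc:
  assumes "\<forall>y\<in>set ys. y < x"
  shows "card {j. j \<le> length ys \<and> list_ascents (insert_at j x ys) = Suc (list_ascents ys)}
    = length ys - list_ascents ys"
  using assms
proof (induction ys rule: list_ascents.induct)
  case (1 y z zs)
  let ?P = "\<lambda>ys j. list_ascents (insert_at j x ys) = Suc (list_ascents ys)"
  have "\<not> x < y" "\<not> x < z"
    using "1.prems" by auto
  moreover have "list_ascents (z # zs) \<le> length zs"
    using list_ascents_less_length[of "z # zs"] by simp
  moreover have "card {j. j \<le> length zs \<and> ?P (z # zs) (Suc j)} = Suc (length zs) - list_ascents (z # zs)"
    using "1.IH" "1.prems" \<open>\<not> x < z\<close> card_Collect_le_Suc_shift[of "length zs" "?P (z # zs)"]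
    by (simp add: list_ascents_Cons_greater)
  ultimately show ?case
    using "1.prems" by (simp add: card_Collect_le_Suc_shift list_ascents_Cons_greater)
qed (auto simp: insert_at_def take_Cons' drop_Cons' card_Collect_le_Suc_shift)

lemma card_insert_at_list_ascents:
  assumes "\<forall>y\<in>set ys. y < x"
  shows "card {j. j \<le> length ys \<and> list_ascents (insert_at j x ys) = k}
    = (if k = list_ascents ys then Suc k else 0)
      + (if k = Suc (list_ascents ys) then length ys - list_ascents ys else 0)"
proof -
  let ?a = "list_ascents ys"
  let ?S = "\<lambda>k. {j. j \<le> length ys \<and> list_ascents (insert_at j x ys) = k}"
  have "?S ?a \<union> ?S (Suc ?a) = {..length ys}"
    using list_ascents_insert_at_greater[OF assms] by auto
  moreover have "card (?S ?a \<union> ?S (Suc ?a)) = card (?S ?a) + card (?S (Suc ?a))"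
    by (rule card_Un_disjoint) auto
  ultimately have "card (?S ?a) + card (?S (Suc ?a)) = Suc (length ys)"
    by simp
  moreover have "?a \<le> length ys"
    using list_ascents_less_length[of ys] by (cases ys) auto
  moreover have "?S k = {}" if "k \<noteq> ?a" "k \<noteq> Suc ?a"
    using list_ascents_insert_at_greater[OF assms] that by blast
  ultimately show ?thesis
    using card_insert_at_list_ascents_Suc[OF assms] by (cases "k = ?a"; cases "k = Suc ?a") simp_all
qed

lemma bij_betw_insert_at_permutations_of_set:
  assumes "finite A" "x \<notin> A"
  shows "bij_betw (\<lambda>(ys, j). insert_at j x ys)
           (permutations_of_set A \<times> {..card A}) (permutations_of_set (insert x A))"
proof (rule inj_on_card_eq_imp_bij_betw)
  show "inj_on (\<lambda>(ys, j). insert_at j x ys) (permutations_of_set A \<times> {..card A})"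
  proof (rule inj_on_inverseI[where g = "\<lambda>xs. (remove1 x xs, length (takeWhile (\<lambda>y. y \<noteq> x) xs))"])
    fix p assume "p \<in> permutations_of_set A \<times> {..card A}"
    then obtain ys j where p: "p = (ys, j)" "set ys = A" "j \<le> length ys"
      by (auto simp: permutations_of_set_def distinct_card)
    then have "x \<notin> set (take j ys)" "x \<notin> set (drop j ys)"
      using assms(2) by (auto dest: in_set_takeD in_set_dropD)
    moreover from this have "takeWhile (\<lambda>y. y \<noteq> x) (take j ys @ x # drop j ys) = take j ys"
      by (subst takeWhile_append2) auto
    ultimately show "(remove1 x ((\<lambda>(ys, j). insert_at j x ys) p),
                length (takeWhile (\<lambda>y. y \<noteq> x) ((\<lambda>(ys, j). insert_at j x ys) p))) = p"
      using p by (simp add: insert_at_def remove1_append)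
  qed
  show "(\<lambda>(ys, j). insert_at j x ys) ` (permutations_of_set A \<times> {..card A})
      \<subseteq> permutations_of_set (insert x A)"
    using assms(2) by (auto simp: permutations_of_set_def distinct_insert_at)
  show "card (permutations_of_set A \<times> {..card A}) = card (permutations_of_set (insert x A))"
    using assms by (simp add: card_cartesian_product)
qed simp

lemma sum_if_list_ascents_eq:
  "(\<Sum>ys\<in>permutations_of_set {1..n}. if k = list_ascents ys then c else 0) = c * eulerian n k"
  unfolding eulerian_conv_list_ascents sum.inter_filter[OF finite_permutations_of_set, symmetric]
  by (simp add: eq_commute[of k])

lemma eulerian_Suc:
  "eulerian (Suc n) k = Suc k * eulerian n k + (if k = 0 then 0 else (Suc n - k) * eulerian n (k - 1))"
proof -
  let ?P = "permutations_of_set {1..n}"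
  let ?S = "\<lambda>ys. {j. j \<le> n \<and> list_ascents (insert_at j (Suc n) ys) = k}"
  have "bij_betw (\<lambda>(ys, j). insert_at j (Suc n) ys) (?P \<times> {..n}) (permutations_of_set {1..Suc n})"
    using bij_betw_insert_at_permutations_of_set[of "{1..n}" "Suc n"]
    by (simp add: atLeastAtMostSuc_conv)
  then have "bij_betw (\<lambda>(ys, j). insert_at j (Suc n) ys)
      {p \<in> ?P \<times> {..n}. case p of (ys, j) \<Rightarrow> list_ascents (insert_at j (Suc n) ys) = k}
      {xs \<in> permutations_of_set {1..Suc n}. list_ascents xs = k}"
    by (rule bij_betw_Collect) auto
  moreover have "{p \<in> ?P \<times> {..n}. case p of (ys, j) \<Rightarrow> list_ascents (insert_at j (Suc n) ys) = k}
      = Sigma ?P ?S"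
    by auto
  ultimately have "eulerian (Suc n) k = card (Sigma ?P ?S)"
    unfolding eulerian_conv_list_ascents by (simp add: bij_betw_same_card)
  also have "\<dots> = (\<Sum>ys\<in>?P. card (?S ys))"
    by (rule card_SigmaI) auto
  also have "\<dots> = (\<Sum>ys\<in>?P. (if k = list_ascents ys then Suc k else 0)
      + (if k = Suc (list_ascents ys) then n - list_ascents ys else 0))"
  proof (rule sum.cong)
    fix ys assume "ys \<in> ?P"
    then have "\<forall>y\<in>set ys. y < Suc n" "length ys = n"
      by (auto simp: permutations_of_set_def length_finite_permutations_of_set)
    then show "card (?S ys) = (if k = list_ascents ys then Suc k else 0)
        + (if k = Suc (list_ascents ys) then n - list_ascents ys else 0)"
      using card_insert_at_list_ascents[of ys "Suc n" k] by simp
  qed simp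
  also have "\<dots> = Suc k * eulerian n k + (if k = 0 then 0 else (Suc n - k) * eulerian n (k - 1))"
  proof -
    have "(\<Sum>ys\<in>?P. if k = Suc (list_ascents ys) then n - list_ascents ys else 0)
        = (if k = 0 then 0 else (Suc n - k) * eulerian n (k - 1))"
      by (cases k) (simp_all add: sum_if_list_ascents_eq[symmetric] cong: if_cong)
    then show ?thesis
      using sum_if_list_ascents_eq[of k "Suc k"] by (simp add: sum.distrib)
  qed
  finally show ?thesis .
qed

section \<open>Symmetry and Worpitzky's identity\<close>

lemma eulerian_0: "eulerian 0 k = (if k = 0 then 1 else 0)"
  by (simp add: eulerian_conv_list_ascents Collect_conv_if)

lemma eulerian_eq_0:
  assumes "n \<le> k" "k \<noteq> 0"
  shows "eulerian n k = 0"
proof -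
  have "list_ascents xs \<noteq> k" if "xs \<in> permutations_of_set {1..n}" for xs
    using that assms list_ascents_less_length[of xs]
    by (cases "xs = []") (auto simp: length_finite_permutations_of_set)
  then show ?thesis
    by (auto simp: eulerian_conv_list_ascents)
qed

lemma eulerian_sym:
  assumes "k < n"
  shows "eulerian n (n - 1 - k) = eulerian n k"
proof -
  let ?P = "permutations_of_set {1..n}"
  let ?f = "\<lambda>x. Suc n - x"
  have inj: "inj_on ?f {1..n}"
    by (rule inj_onI) auto
  then have "?f ` {1..n} = {1..n}"
    by (intro endo_inj_surj) auto
  then have "map ?f ` ?P = ?P"
    using permutations_of_set_image_inj[OF inj] by simp
  moreover have "inj_on (map ?f) ?P"
    by (rule inj_on_inverseI[where g = "map ?f"]) (auto simp: permutations_of_set_def intro!: map_idI)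
  ultimately have bij: "bij_betw (map ?f) ?P ?P"
    by (simp add: bij_betw_def)
  have "list_ascents (map ?f xs) = n - 1 - list_ascents xs" if "xs \<in> ?P" for xs
    using that list_ascents_map_antimono[of xs ?f]
    by (auto simp: permutations_of_set_def length_finite_permutations_of_set[OF that])
  moreover have "list_ascents xs < n" if "xs \<in> ?P" for xs
    using that assms list_ascents_less_length[of xs]
    by (cases "xs = []") (auto simp: length_finite_permutations_of_set)
  ultimately have "bij_betw (map ?f) {xs \<in> ?P. list_ascents xs = k} {ys \<in> ?P. list_ascents ys = n - 1 - k}"
    using assms by (intro bij_betw_Collect[OF bij]) fastforce
  then show ?thesis
    unfolding eulerian_conv_list_ascents by (simp add: bij_betw_same_card)
qed

lemma binomial_mult_eq:
  assumes "j \<le> n"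
  shows "x * ((x + j) choose n)
    = Suc j * ((x + j) choose Suc n) + (n - j) * (Suc (x + j) choose Suc n)"
proof -
  define y where "y = x + j"
  have absorb: "Suc n * (y choose Suc n) = (y - n) * (y choose n)"
    by (simp only: binomial_absorption binomial_absorb_comp)
  have "Suc j * (y choose Suc n) + (n - j) * (Suc y choose Suc n)
      = (Suc j + (n - j)) * (y choose Suc n) + (n - j) * (y choose n)"
    by (simp add: algebra_simps)
  also have "\<dots> = (y - n + (n - j)) * (y choose n)"
    using assms absorb by (simp add: algebra_simps)
  also have "\<dots> = x * (y choose n)"
    using assms by (cases "n \<le> y") (auto simp: y_def binomial_eq_0)
  finally show ?thesis
    unfolding y_def ..
qed

theorem worpitzky: "x ^ n = (\<Sum>j\<le>n. eulerian n j * ((x + j) choose n))"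
proof (induction n)
  case 0
  then show ?case by (simp add: eulerian_0)
next
  case (Suc n)
  have "x ^ Suc n = (\<Sum>j\<le>n. eulerian n j * (x * ((x + j) choose n)))"
    using Suc by (simp add: sum_distrib_left algebra_simps)
  also have "\<dots> = (\<Sum>j\<le>n. eulerian n j * (Suc j * ((x + j) choose Suc n)
      + (n - j) * (Suc (x + j) choose Suc n)))"
    by (intro sum.cong) (simp_all add: binomial_mult_eq)
  also have "\<dots> = (\<Sum>j\<le>n. Suc j * eulerian n j * ((x + j) choose Suc n))
      + (\<Sum>j\<le>n. (n - j) * eulerian n j * ((x + Suc j) choose Suc n))"
    by (simp add: sum.distrib algebra_simps)
  also have "(\<Sum>j\<le>n. Suc j * eulerian n j * ((x + j) choose Suc n))
      = (\<Sum>j\<le>Suc n. Suc j * eulerian n j * ((x + j) choose Suc n))"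
    by (simp add: eulerian_eq_0)
  also have "(\<Sum>j\<le>n. (n - j) * eulerian n j * ((x + Suc j) choose Suc n))
      = (\<Sum>j\<le>Suc n. (if j = 0 then 0 else (Suc n - j) * eulerian n (j - 1)) * ((x + j) choose Suc n))"
    by (subst sum.atMost_Suc_shift) simp
  also have "(\<Sum>j\<le>Suc n. Suc j * eulerian n j * ((x + j) choose Suc n))
      + (\<Sum>j\<le>Suc n. (if j = 0 then 0 else (Suc n - j) * eulerian n (j - 1)) * ((x + j) choose Suc n))
      = (\<Sum>j\<le>Suc n. eulerian (Suc n) j * ((x + j) choose Suc n))"
    by (simp add: sum.distrib[symmetric] eulerian_Suc algebra_simps)
  finally show ?case .
qed

section \<open>Exponential bounds\<close>

lemma eulerian_ge_power: "k < n \<Longrightarrow> (k + 1) ^ (n - k - 1) \<le> eulerian n k"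
proof (induction n arbitrary: k)
  case 0
  then show ?case by simp
next
  case (Suc n)
  show ?case
  proof (cases "k < n")
    case True
    have "Suc n - k - 1 = Suc (n - k - 1)"
      using True by simp
    then have "(k + 1) ^ (Suc n - k - 1) = (k + 1) * (k + 1) ^ (n - k - 1)"
      by simp
    also have "\<dots> \<le> (k + 1) * eulerian n k"
      using Suc.IH[OF True] by (rule mult_le_mono2)
    also have "\<dots> \<le> eulerian (Suc n) k"
      by (simp add: eulerian_Suc)
    finally show ?thesis .
  next
    case False
    then have "k = n" using Suc.prems by simp
    moreover have "0 < eulerian n (n - 1)" if "0 < n"
      using Suc.IH[of "n - 1"] that by simp
    ultimately show ?thesis
      using eulerian_Suc[of n n] by (cases n) (simp_all add: eulerian_0)
  qed
qed

lemma binomial_Suc_le: "(Suc y choose n) \<le> (if Suc y = n then 1 else 0) + Suc n * (y choose n)"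
proof (cases "n \<le> y")
  case True
  define d where "d = Suc y - n"
  have "d * (Suc y choose n) = (n + d) * (y choose n)"
    using binomial_absorb_comp[of "Suc y" n] True by (simp add: d_def)
  also have "\<dots> \<le> d * Suc n * (y choose n)"
  proof (intro mult_le_mono1)
    have "1 \<le> d" using True by (simp add: d_def)
    then have "n \<le> d * n" by simp
    then show "n + d \<le> d * Suc n" by simp
  qed
  finally have "d * (Suc y choose n) \<le> d * (Suc n * (y choose n))"
    by (simp only: mult.assoc)
  moreover have "0 < d"
    using True by (simp add: d_def)
  ultimately show ?thesis
    using True by simp
qed (auto simp: binomial_eq_0 not_le less_Suc_eq)

lemma eulerian_le_power: "eulerian n m \<le> (m + 1) ^ n"
proof (cases "m < n")
  case True
  have "eulerian n m = eulerian n (n - 1 - m) * ((m + 1 + (n - 1 - m)) choose n)"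
    using eulerian_sym[OF True] True by simp
  also have "\<dots> \<le> (\<Sum>j\<le>n. eulerian n j * ((m + 1 + j) choose n))"
    by (rule member_le_sum) auto
  also have "\<dots> = (m + 1) ^ n"
    by (rule worpitzky[symmetric])
  finally show ?thesis .
next
  case False
  then show ?thesis
    by (cases "m = 0") (simp_all add: eulerian_0 eulerian_eq_0)
qed

lemma power_le_eulerian_add:
  assumes "m < n"
  shows "(m + 1) ^ n \<le> eulerian n m + (n + 1) * m ^ n"
proof -
  let ?j = "n - 1 - m"
  have "(m + 1) ^ n = (\<Sum>j\<le>n. eulerian n j * (Suc (m + j) choose n))"
    by (simp add: worpitzky)
  also have "\<dots> \<le> (\<Sum>j\<le>n. (if j = ?j then eulerian n j else 0)
      + Suc n * (eulerian n j * ((m + j) choose n)))"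
  proof (intro sum_mono)
    fix j
    have "Suc (m + j) = n \<longleftrightarrow> j = ?j"
      using assms by auto
    then have "(Suc (m + j) choose n) \<le> (if j = ?j then 1 else 0) + Suc n * ((m + j) choose n)"
      using binomial_Suc_le[of "m + j" n] by simp
    then have "eulerian n j * (Suc (m + j) choose n)
        \<le> eulerian n j * ((if j = ?j then 1 else 0) + Suc n * ((m + j) choose n))"
      by (rule mult_le_mono2)
    then show "eulerian n j * (Suc (m + j) choose n)
        \<le> (if j = ?j then eulerian n j else 0) + Suc n * (eulerian n j * ((m + j) choose n))"
      using assms by (cases "j = ?j") (simp_all add: algebra_simps)
  qed
  also have "\<dots> = eulerian n ?j + (n + 1) * (\<Sum>j\<le>n. eulerian n j * ((m + j) choose n))"
    by (simp add: sum.distrib sum_distrib_left)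
  also have "\<dots> = eulerian n m + (n + 1) * m ^ n"
    using eulerian_sym[OF assms] by (simp add: worpitzky)
  finally show ?thesis .
qed

section \<open>The quadratic inequality\<close>

lemma eulerian_square_ge_power:
  assumes "k < n"
  shows "(k + 1) ^ (2 * (n - k - 1)) \<le> (eulerian n k)\<^sup>2"
proof -
  have "((k + 1) ^ (n - k - 1))\<^sup>2 \<le> (eulerian n k)\<^sup>2"
    using eulerian_ge_power[OF assms] by (rule power_mono) simp
  then show ?thesis
    by (simp add: power_mult[symmetric] mult.commute)
qed

lemma mult_power_le_mult_power:
  fixes a b c d :: nat
  assumes "a \<le> b" "N \<le> n" "c * a ^ N \<le> d"
  shows "c * a ^ n \<le> d * b ^ (n - N)"
proof -
  have "c * a ^ n = c * a ^ N * a ^ (n - N)"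
    using assms(2) by (simp add: power_add[symmetric])
  also have "\<dots> \<le> d * b ^ (n - N)"
    using assms(1,3) by (intro mult_le_mono power_mono) auto
  finally show ?thesis .
qed

lemma Suc_mult_power_le_Suc_power_mono:
  fixes c d k :: nat
  assumes "k \<le> N" "N \<le> n" "c * (N + 1) * k ^ N \<le> d * (k + 1) ^ N"
  shows "c * (n + 1) * k ^ n \<le> d * (k + 1) ^ n"
  using assms(2)
proof (induction n rule: dec_induct)
  case base
  then show ?case using assms(3) .
next
  case (step n)
  have "(n + 2) * k \<le> (n + 1) * (k + 1)"
    using step assms(1) by (simp add: algebra_simps)
  then have "(c * k ^ n) * ((n + 2) * k) \<le> (c * k ^ n) * ((n + 1) * (k + 1))"
    by (rule mult_le_mono2)
  then have "c * (Suc n + 1) * k ^ Suc n \<le> (c * (n + 1) * k ^ n) * (k + 1)"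
    by (simp add: algebra_simps)
  also have "\<dots> \<le> (d * (k + 1) ^ n) * (k + 1)"
    using step.IH by (rule mult_le_mono1)
  also have "\<dots> = d * (k + 1) ^ Suc n"
    by (simp only: mult.assoc power_Suc2)
  finally show ?case .
qed

lemma three_mult_add_two_le_square: "2 \<le> k \<Longrightarrow> 3 * k + 2 \<le> (k + 1 :: nat)\<^sup>2"
proof -
  assume "2 \<le> k"
  moreover have "2 * k \<le> k * k"
    using \<open>2 \<le> k\<close> by (rule mult_le_mono1)
  moreover have "(k + 1)\<^sup>2 = k * k + 2 * k + 1"
    by (simp add: power2_eq_square algebra_simps)
  ultimately show ?thesis
    by linarith
qed

lemma four_eulerian_le_square_mid_range:
  assumes "2 \<le> k" "3 * k + 2 \<le> n" "n \<le> 4 * k + 2"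
  shows "4 * eulerian n (3 * k + 1) \<le> (eulerian n k)\<^sup>2"
proof -
  have "eulerian n (3 * k + 1) = eulerian n (n - 1 - (3 * k + 1))"
    using eulerian_sym[of "3 * k + 1" n] assms by simp
  also have "\<dots> \<le> (n - 1 - (3 * k + 1) + 1) ^ n"
    by (rule eulerian_le_power)
  also have "\<dots> \<le> (k + 1) ^ n"
    using assms by (intro power_mono) auto
  finally have upper: "eulerian n (3 * k + 1) \<le> (k + 1) ^ n" .
  have "4 \<le> (k + 1)\<^sup>2"
    using assms power_mono[of 3 "k + 1" 2] by simp
  also have "\<dots> \<le> (k + 1) ^ (n - 2 * k - 2)"
    using assms by (intro power_increasing) auto
  finally have "4 * (k + 1) ^ n \<le> (k + 1) ^ (n - 2 * k - 2) * (k + 1) ^ n"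
    by (rule mult_le_mono1)
  also have "\<dots> = (k + 1) ^ (2 * (n - k - 1))"
    using assms by (simp add: power_add[symmetric])
  also have "\<dots> \<le> (eulerian n k)\<^sup>2"
    using assms by (intro eulerian_square_ge_power) simp
  finally show ?thesis
    using upper by linarith
qed

lemma twelve_mult_six_power_le: "19 \<le> e \<Longrightarrow> 12 * 6 ^ e \<le> (7 :: nat) ^ e"
proof (induction e rule: dec_induct)
  case (step e)
  then show ?case by simp
qed simp

lemma four_mult_power_le_power:
  assumes "9 \<le> k"
  shows "4 * (3 * k + 2) ^ (4 * k + 3) \<le> (k + 1) ^ (2 * (3 * k + 2))"
proof -
  define e where "e = 2 * k + 1"
  define X where "X = (3 * k + 2)\<^sup>2"
  define Y where "Y = (k + 1) ^ 3"
  obtain t where "k = 9 + t"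
    using assms le_Suc_ex by blast
  then have "7 * X \<le> 6 * Y"
    by (simp add: X_def Y_def power2_eq_square power3_eq_cube algebra_simps)
  then have XY: "7 ^ e * X ^ e \<le> 6 ^ e * Y ^ e"
    by (metis power_mono power_mult_distrib zero_le)
  have "6 ^ e * (12 * X ^ e) = 12 * 6 ^ e * X ^ e"
    by (simp add: algebra_simps)
  also have "\<dots> \<le> 7 ^ e * X ^ e"
    using assms twelve_mult_six_power_le[of e] by (intro mult_le_mono1) (simp add: e_def)
  also have "\<dots> \<le> 6 ^ e * Y ^ e"
    by (rule XY)
  finally have "12 * X ^ e \<le> Y ^ e"
    by simp
  have "4 * k + 3 = Suc (2 * e)"
    by (simp add: e_def)
  then have "4 * (3 * k + 2) ^ (4 * k + 3) = 4 * ((3 * k + 2) * X ^ e)"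
    by (simp only: power_Suc X_def power_mult)
  also have "\<dots> \<le> (k + 1) * (12 * X ^ e)"
    by (simp add: algebra_simps)
  also have "\<dots> \<le> (k + 1) * Y ^ e"
    using \<open>12 * X ^ e \<le> Y ^ e\<close> by (rule mult_le_mono2)
  also have "\<dots> = (k + 1) ^ Suc (3 * e)"
    by (simp only: power_Suc Y_def power_mult)
  also have "Suc (3 * e) = 2 * (3 * k + 2)"
    by (simp add: e_def)
  finally show ?thesis .
qed

lemma four_eulerian_le_square_large_k:
  assumes "9 \<le> k" "4 * k + 3 \<le> n"
  shows "4 * eulerian n (3 * k + 1) \<le> (eulerian n k)\<^sup>2"
proof -
  have "4 * eulerian n (3 * k + 1) \<le> 4 * (3 * k + 2) ^ n"
    using eulerian_le_power[of n "3 * k + 1"] by simp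
  also have "\<dots> \<le> (k + 1) ^ (2 * (3 * k + 2)) * ((k + 1)\<^sup>2) ^ (n - (4 * k + 3))"
    using assms three_mult_add_two_le_square four_mult_power_le_power
    by (intro mult_power_le_mult_power) auto
  also have "\<dots> = (k + 1) ^ (2 * (n - k - 1))"
  proof -
    have "2 * (n - k - 1) = 2 * (3 * k + 2) + 2 * (n - (4 * k + 3))"
      using assms by simp
    then show ?thesis
      by (simp only: power_add power_mult)
  qed
  also have "\<dots> \<le> (eulerian n k)\<^sup>2"
    using assms by (intro eulerian_square_ge_power) simp
  finally show ?thesis .
qed

lemma power_le_mult_eulerian:
  assumes "k < N" "N \<le> n" "(c + 1) * (N + 1) * k ^ N \<le> c * (k + 1) ^ N"
  shows "(k + 1) ^ n \<le> (c + 1) * eulerian n k"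
proof -
  have "(c + 1) * (k + 1) ^ n \<le> (c + 1) * (eulerian n k + (n + 1) * k ^ n)"
    using assms by (intro mult_le_mono2 power_le_eulerian_add) simp
  also have "\<dots> = (c + 1) * eulerian n k + (c + 1) * (n + 1) * k ^ n"
    by (simp add: algebra_simps)
  also have "\<dots> \<le> (c + 1) * eulerian n k + c * (k + 1) ^ n"
    using Suc_mult_power_le_Suc_power_mono[OF less_imp_le[OF assms(1)] assms(2,3)]
    by (rule add_left_mono)
  finally show ?thesis
    by simp
qed

lemma four_eulerian_le_square_of_bounds:
  assumes "2 \<le> k" "k < N" "N \<le> n"
    and "(c + 1) * (N + 1) * k ^ N \<le> c * (k + 1) ^ N"
    and "4 * (c + 1)\<^sup>2 * (3 * k + 2) ^ N \<le> (k + 1) ^ (2 * N)"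
  shows "4 * eulerian n (3 * k + 1) \<le> (eulerian n k)\<^sup>2"
proof -
  have "((c + 1))\<^sup>2 * (4 * eulerian n (3 * k + 1)) \<le> 4 * ((c + 1))\<^sup>2 * (3 * k + 2) ^ n"
    using eulerian_le_power[of n "3 * k + 1"] by simp
  also have "\<dots> \<le> (k + 1) ^ (2 * N) * ((k + 1)\<^sup>2) ^ (n - N)"
    using assms three_mult_add_two_le_square by (intro mult_power_le_mult_power) auto
  also have "\<dots> = ((k + 1) ^ n)\<^sup>2"
  proof -
    have "2 * n = 2 * N + 2 * (n - N)"
      using assms by simp
    then show ?thesis
      by (simp only: power_add power_mult[symmetric] mult.commute[of n 2])
  qed
  also have "\<dots> \<le> ((c + 1) * eulerian n k)\<^sup>2"
    using assms by (intro power_mono power_le_mult_eulerian) auto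
  also have "\<dots> = ((c + 1))\<^sup>2 * (eulerian n k)\<^sup>2"
    by (rule power_mult_distrib)
  finally show ?thesis
    by (rule mult_left_le_imp_le) simp
qed

lemma four_eulerian_7_le_square_eulerian_2:
  assumes "11 \<le> n" "n \<le> 23"
  shows "4 * eulerian n 7 \<le> (eulerian n 2)\<^sup>2"
proof -
  have "eulerian n 7 = eulerian n (n - 1 - 7)"
    using eulerian_sym[of 7 n] assms by simp
  also have "\<dots> \<le> (n - 1 - 7 + 1) ^ n"
    by (rule eulerian_le_power)
  also have "n - 1 - 7 + 1 = n - 7"
    using assms by simp
  finally have "4 * eulerian n 7 \<le> 4 * min (8 ^ n) ((n - 7) ^ n)"
    using eulerian_le_power[of n 7] by simp
  also have "\<dots> \<le> (3 ^ n - (n + 1) * 2 ^ n)\<^sup>2"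
  proof -
    have "\<forall>n \<in> set [11..<24]. 4 * min (8 ^ n) ((n - 7) ^ n) \<le> (3 ^ n - (n + 1) * 2 ^ n :: nat)\<^sup>2"
      by (simp add: upt_rec)
    moreover have "n \<in> set [11..<24]"
      unfolding set_upt using assms by simp
    ultimately show ?thesis
      by blast
  qed
  also have "\<dots> \<le> (eulerian n 2)\<^sup>2"
    using power_le_eulerian_add[of 2 n] assms by (intro power_mono) simp_all
  finally show ?thesis .
qed

lemma four_eulerian_le_square_small_k:
  assumes "2 \<le> k" "k \<le> 8" "4 * k + 3 \<le> n"
  shows "4 * eulerian n (3 * k + 1) \<le> (eulerian n k)\<^sup>2"
proof -
  (* The thresholds N and constants c were found numerically. For k = 2 the second
     hypothesis of four_eulerian_le_square_of_bounds forces N >= 24. *)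
  consider "k = 2" "n \<le> 23" | "k = 2" "24 \<le> n" | "k = 3" | "k = 4" | "k = 5" | "k = 6" | "k = 7" | "k = 8"
    using assms by linarith
  then show ?thesis
  proof cases
    case 1
    then show ?thesis using four_eulerian_7_le_square_eulerian_2[of n] assms by simp
  next
    case 2
    then show ?thesis using four_eulerian_le_square_of_bounds[of 2 24 n 1]
      by (simp add: power2_eq_square)
  next
    case 3
    then show ?thesis using four_eulerian_le_square_of_bounds[of k 15 n 1] assms
      by (simp add: power2_eq_square)
  next
    case 4
    then show ?thesis using four_eulerian_le_square_of_bounds[of k 19 n 1] assms
      by (simp add: power2_eq_square)
  next
    case 5
    then show ?thesis using four_eulerian_le_square_of_bounds[of k 23 n 1] assms
      by (simp add: power2_eq_square)
  next
    case 6
    then show ?thesis using four_eulerian_le_square_of_bounds[of k 27 n 1] assms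
      by (simp add: power2_eq_square)
  next
    case 7
    then show ?thesis using four_eulerian_le_square_of_bounds[of k 31 n 2] assms
      by (simp add: power2_eq_square)
  next
    case 8
    then show ?thesis using four_eulerian_le_square_of_bounds[of k 35 n 2] assms
      by (simp add: power2_eq_square)
  qed
qed

theorem four_eulerian_le_square:
  assumes "2 \<le> k"
  shows "4 * eulerian n (3 * k + 1) \<le> (eulerian n k)\<^sup>2"
proof -
  consider "n \<le> 3 * k + 1" | "3 * k + 2 \<le> n" "n \<le> 4 * k + 2" | "4 * k + 3 \<le> n" "9 \<le> k"
    | "4 * k + 3 \<le> n" "k \<le> 8"
    by linarith
  then show ?thesis
  proof cases
    case 1
    then show ?thesis by (simp add: eulerian_eq_0)
  qed (use assms four_eulerian_le_square_mid_range four_eulerian_le_square_large_k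
        four_eulerian_le_square_small_k in blast)+
qed

lemma double_less_mult_pred:
  assumes "3 \<le> a" "4 * b \<le> a\<^sup>2"
  shows "2 * int b < int a * (int a - 1)"
proof -
  have "4 * int b \<le> int a * int a"
    using assms(2) by (simp add: power2_eq_square flip: of_nat_mult)
  moreover have "3 * int a \<le> int a * int a"
    using assms(1) by (intro mult_right_mono) auto
  moreover have "int a * (int a - 1) = int a * int a - int a"
    by (simp add: algebra_simps)
  ultimately show ?thesis
    using assms(1) by linarith
qed

theorem mainTheorem20:
  fixes n r :: nat
  assumes "3 \<le> r" and "r + 2 \<le> n"
  shows "int (eulerian n (r - 1)) * (int (eulerian n (r - 1)) - 1) > 2 * int (eulerian n (3 * r - 2))"
proof -
  define k where "k = r - 1"
  have k: "2 \<le> k" "k + 3 \<le> n" "3 * r - 2 = 3 * k + 1"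
    using assms by (simp_all add: k_def)
  have "3 \<le> (k + 1) ^ 1"
    using k by simp
  also have "\<dots> \<le> (k + 1) ^ (n - k - 1)"
    using k by (intro power_increasing) simp_all
  also have "\<dots> \<le> eulerian n k"
    using k by (intro eulerian_ge_power) simp
  finally have "3 \<le> eulerian n k"
    by simp
  then show ?thesis
    unfolding k(3) k_def[symmetric] using four_eulerian_le_square[OF k(1), of n]
    by (rule double_less_mult_pred)
qed

end
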